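(* Let $\mathscr G=(\mathscr V,\mathscr E)$ be a finite connected graph with $N$ vertices and $M\ge0$ an integer. The uniform saving model $(Z_t)$ on $\mathscr C_{N,M}$ has a unique stationary distribution $\pi_Z$, and $$\lim_{t\to\infty}P_\eta(Z_t=\xi)=\pi_Z(\xi)\quad\text{for all }\xi,\eta\in\mathscr C_{N,M},$$ where $P_\eta$ denotes the law of the process started from $Z_0=\eta$.
   Context: $\mathscr C_{N,M}$ is the set of maps $\xi:\mathscr V\to\mathbb N$ with $\sum_x\xi(x)=M$. The uniform saving model is the discrete-time Markov chain on $\mathscr C_{N,M}$: at each step an edge $(x,y)\in\mathscr E$ is chosen uniformly at random; independent $U_1$ uniform on $\{0,\dots,Z_t(x)\}$ and $U_2$ uniform on $\{0,\dots,Z_t(y)\}$ are drawn; given $U_1=c_x,U_2=c_y$, $U$ is drawn uniformly from $\{0,\dots,Z_t(x)+Z_t(y)-c_x-c_y\}$; then $Z_{t+1}(x)=c_x+U$, $Z_{t+1}(y)=Z_t(x)+Z_t(y)-c_x-U$, $Z_{t+1}(z)=Z_t(z)$ for $z\notin\{x,y\}$. *)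

theory Defs
  imports "HOL-Probability.Probability_Mass_Function"
begin

definition configs :: "'a set \<Rightarrow> nat \<Rightarrow> ('a \<Rightarrow> nat) set" where
  "configs V M = {\<xi>. (\<forall>z. z \<notin> V \<longrightarrow> \<xi> z = 0) \<and> (\<Sum>x\<in>V. \<xi> x) = M}"

definition finite_connected_graph :: "'a set \<Rightarrow> ('a \<times> 'a) set \<Rightarrow> bool" where
  "finite_connected_graph V E \<longleftrightarrow> finite V \<and> V \<noteq> {} \<and> E \<subseteq> V \<times> V \<and>
     (\<forall>x. (x, x) \<notin> E) \<and> (\<forall>x\<in>V. \<forall>y\<in>V. (x, y) \<in> (E \<union> E\<inverse>)\<^sup>*)"

definition usm_step :: "('a \<times> 'a) set \<Rightarrow> ('a \<Rightarrow> nat) \<Rightarrow> ('a \<Rightarrow> nat) pmf" where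
  "usm_step E \<xi> =
     (if E = {} then return_pmf \<xi> else
      bind_pmf (pmf_of_set E) (\<lambda>(x, y).
      bind_pmf (pmf_of_set {0..\<xi> x}) (\<lambda>cx.
      bind_pmf (pmf_of_set {0..\<xi> y}) (\<lambda>cy.
      bind_pmf (pmf_of_set {0..\<xi> x + \<xi> y - cx - cy}) (\<lambda>u.
      return_pmf (\<xi>(x := cx + u, y := \<xi> x + \<xi> y - cx - u)))))))"

definition usm_law :: "('a \<times> 'a) set \<Rightarrow> ('a \<Rightarrow> nat) \<Rightarrow> nat \<Rightarrow> ('a \<Rightarrow> nat) pmf" where
  "usm_law E \<eta> t = ((\<lambda>p. bind_pmf p (usm_step E)) ^^ t) (return_pmf \<eta>)"

definition usm_stationary :: "'a set \<Rightarrow> ('a \<times> 'a) set \<Rightarrow> nat \<Rightarrow> ('a \<Rightarrow> nat) pmf \<Rightarrow> bool" where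
  "usm_stationary V E M \<pi> \<longleftrightarrow> set_pmf \<pi> \<subseteq> configs V M \<and> bind_pmf \<pi> (usm_step E) = \<pi>"

end

theory Submission
  imports Defs
begin

text \<open>
  The state space \<open>C\<^sub>N\<^sub>,\<^sub>M\<close> is finite and closed under the dynamics, every state keeps positive
  probability of staying put (choose \<open>U\<^sub>1 = U\<^sub>2 = 0\<close> and \<open>U = Z(x)\<close>), and by pushing the whole
  content of a vertex to a neighbour, mass can be transported along paths of the connected
  graph until it is concentrated at one fixed vertex \<open>v\<^sub>0\<close>. Hence there are \<open>k\<close> and \<open>\<delta> > 0\<close>
  such that from every state the concentrated configuration is reached in exactly \<open>k\<close> steps
  with probability at least \<open>\<delta>\<close>. This Doeblin condition makes the oscillation
  \<open>max\<^sub>x P\<^sub>x(Z\<^sub>t = \<xi>) - min\<^sub>x P\<^sub>x(Z\<^sub>t = \<xi>)\<close> decrease by the factor \<open>1 - \<delta>\<close> every \<open>k\<close> steps, so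
  \<open>P\<^sub>x(Z\<^sub>t = \<xi>)\<close> converges to a limit independent of \<open>x\<close>; the limits form a stationary
  distribution, and any stationary distribution, being invariant under \<open>t\<close> steps, must equal it.
\<close>

section \<open>Finite Markov kernels satisfying a Doeblin condition\<close>

definition kernel_law :: "('b \<Rightarrow> 'b pmf) \<Rightarrow> 'b \<Rightarrow> nat \<Rightarrow> 'b pmf" where
  "kernel_law K x t = ((\<lambda>p. bind_pmf p K) ^^ t) (return_pmf x)"

definition stationary_on :: "'b set \<Rightarrow> ('b \<Rightarrow> 'b pmf) \<Rightarrow> 'b pmf \<Rightarrow> bool" where
  "stationary_on S K \<pi> \<longleftrightarrow> set_pmf \<pi> \<subseteq> S \<and> bind_pmf \<pi> K = \<pi>"

lemma kernel_law_0 [simp]: "kernel_law K x 0 = return_pmf x"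
  by (simp add: kernel_law_def)

lemma kernel_law_Suc: "kernel_law K x (Suc t) = bind_pmf (kernel_law K x t) K"
  by (simp add: kernel_law_def)

lemma kernel_law_add: "kernel_law K x (j + t) = bind_pmf (kernel_law K x j) (\<lambda>z. kernel_law K z t)"
  by (induction t) (simp_all add: bind_return_pmf' kernel_law_Suc bind_assoc_pmf)

lemma set_pmf_kernel_law_subset:
  assumes "\<And>x. x \<in> S \<Longrightarrow> set_pmf (K x) \<subseteq> S" "x \<in> S"
  shows "set_pmf (kernel_law K x t) \<subseteq> S"
  using assms by (induction t) (auto simp: kernel_law_Suc)

lemma stationary_on_kernel_law:
  assumes "stationary_on S K \<pi>"
  shows "bind_pmf \<pi> (\<lambda>z. kernel_law K z t) = \<pi>"
proof (induction t)
  case (Suc t)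
  have "bind_pmf \<pi> (\<lambda>z. kernel_law K z (Suc t)) = bind_pmf (bind_pmf \<pi> (\<lambda>z. kernel_law K z t)) K"
    by (simp add: kernel_law_Suc bind_assoc_pmf)
  with Suc assms show ?case by (simp add: stationary_on_def)
qed (simp add: bind_return_pmf')

lemma rtranclp_support_kernel_law:
  assumes "(\<lambda>x y. y \<in> set_pmf (K x))\<^sup>*\<^sup>* x y"
  shows "\<exists>t. y \<in> set_pmf (kernel_law K x t)"
  using assms
proof (induction rule: rtranclp_induct)
  case base
  then show ?case by (intro exI[of _ 0]) simp
next
  case (step y z)
  then obtain t where "y \<in> set_pmf (kernel_law K x t)" by blast
  with step(2) have "z \<in> set_pmf (kernel_law K x (Suc t))" by (auto simp: kernel_law_Suc)
  then show ?case by blast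
qed

lemma set_pmf_kernel_law_mono_lazy:
  assumes lazy: "\<And>x. x \<in> set_pmf (K x)" and "y \<in> set_pmf (kernel_law K x t)" "t \<le> t'"
  shows "y \<in> set_pmf (kernel_law K x t')"
proof -
  have "y \<in> set_pmf (kernel_law K x (t + d))" for d
    by (induction d) (use assms(2) lazy in \<open>auto simp: kernel_law_Suc\<close>)
  from this[of "t' - t"] \<open>t \<le> t'\<close> show ?thesis by simp
qed

lemma pmf_bind_finite_support:
  assumes "finite S" "set_pmf p \<subseteq> S"
  shows "pmf (bind_pmf p f) y = (\<Sum>z\<in>S. pmf p z * pmf (f z) y)"
  unfolding pmf_bind using assms
  by (subst integral_measure_pmf_real[of S]) (auto simp: mult.commute)

lemma pmf_weighted_sum_bounds:
  fixes g :: "'b \<Rightarrow> real"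
  assumes "finite S" "set_pmf p \<subseteq> S" "S \<noteq> {}"
  shows "Min (g ` S) \<le> (\<Sum>z\<in>S. pmf p z * g z)" "(\<Sum>z\<in>S. pmf p z * g z) \<le> Max (g ` S)"
proof -
  have "(\<Sum>z\<in>S. pmf p z * Min (g ` S)) \<le> (\<Sum>z\<in>S. pmf p z * g z)"
    by (rule sum_mono) (simp add: assms mult_left_mono)
  then show "Min (g ` S) \<le> (\<Sum>z\<in>S. pmf p z * g z)"
    using sum_pmf_eq_1[OF assms(1,2)] by (simp add: sum_distrib_right[symmetric])
  have "(\<Sum>z\<in>S. pmf p z * g z) \<le> (\<Sum>z\<in>S. pmf p z * Max (g ` S))"
    by (rule sum_mono) (simp add: assms mult_left_mono)
  then show "(\<Sum>z\<in>S. pmf p z * g z) \<le> Max (g ` S)"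
    using sum_pmf_eq_1[OF assms(1,2)] by (simp add: sum_distrib_right[symmetric])
qed

locale doeblin_chain =
  fixes S :: "'b set" and K :: "'b \<Rightarrow> 'b pmf" and s :: 'b and k :: nat
  assumes finite_S: "finite S" and nonempty_S: "S \<noteq> {}"
    and closed: "\<And>x. x \<in> S \<Longrightarrow> set_pmf (K x) \<subseteq> S"
    and reaches: "\<And>x. x \<in> S \<Longrightarrow> s \<in> set_pmf (kernel_law K x k)"
begin

definition prob :: "'b \<Rightarrow> nat \<Rightarrow> 'b \<Rightarrow> real" where
  "prob \<xi> t x = pmf (kernel_law K x t) \<xi>"

definition max_prob :: "'b \<Rightarrow> nat \<Rightarrow> real" where
  "max_prob \<xi> t = Max (prob \<xi> t ` S)"

definition min_prob :: "'b \<Rightarrow> nat \<Rightarrow> real" where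
  "min_prob \<xi> t = Min (prob \<xi> t ` S)"

definition oscillation :: "'b \<Rightarrow> nat \<Rightarrow> real" where
  "oscillation \<xi> t = max_prob \<xi> t - min_prob \<xi> t"

definition doeblin_const :: real where
  "doeblin_const = Min ((\<lambda>x. pmf (kernel_law K x k) s) ` S)"

lemma set_pmf_kernel_law: "x \<in> S \<Longrightarrow> set_pmf (kernel_law K x t) \<subseteq> S"
  by (rule set_pmf_kernel_law_subset[OF closed])

lemma s_in_S: "s \<in> S"
  using nonempty_S reaches set_pmf_kernel_law by blast

lemma doeblin_const_pos: "doeblin_const > 0"
proof -
  have "doeblin_const \<in> (\<lambda>x. pmf (kernel_law K x k) s) ` S"
    unfolding doeblin_const_def using finite_S nonempty_S by (intro Min_in) auto
  then show ?thesis using reaches by (auto simp: pmf_positive)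
qed

lemma doeblin_const_le: "x \<in> S \<Longrightarrow> doeblin_const \<le> pmf (kernel_law K x k) s"
  unfolding doeblin_const_def using finite_S by auto

lemma doeblin_const_le_1: "doeblin_const \<le> 1"
  using doeblin_const_le[OF s_in_S] pmf_le_1[of "kernel_law K s k" s] by linarith

lemma prob_add: "x \<in> S \<Longrightarrow> prob \<xi> (j + t) x = (\<Sum>z\<in>S. pmf (kernel_law K x j) z * prob \<xi> t z)"
  unfolding prob_def kernel_law_add by (rule pmf_bind_finite_support[OF finite_S set_pmf_kernel_law])

lemma prob_le_max_prob: "x \<in> S \<Longrightarrow> prob \<xi> t x \<le> max_prob \<xi> t"
  unfolding max_prob_def using finite_S by auto

lemma min_prob_le_prob: "x \<in> S \<Longrightarrow> min_prob \<xi> t \<le> prob \<xi> t x"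
  unfolding min_prob_def using finite_S by auto

lemma max_prob_attained: obtains x where "x \<in> S" "max_prob \<xi> t = prob \<xi> t x"
proof -
  have "Max (prob \<xi> t ` S) \<in> prob \<xi> t ` S" using finite_S nonempty_S by (intro Max_in) auto
  with that show ?thesis unfolding max_prob_def by auto
qed

lemma min_prob_attained: obtains x where "x \<in> S" "min_prob \<xi> t = prob \<xi> t x"
proof -
  have "Min (prob \<xi> t ` S) \<in> prob \<xi> t ` S" using finite_S nonempty_S by (intro Min_in) auto
  with that show ?thesis unfolding min_prob_def by auto
qed

lemma max_prob_antimono: "max_prob \<xi> (j + t) \<le> max_prob \<xi> t"
proof -
  obtain x where x: "x \<in> S" "max_prob \<xi> (j + t) = prob \<xi> (j + t) x"
    by (rule max_prob_attained)
  then show ?thesis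
    using prob_add[OF x(1)] pmf_weighted_sum_bounds(2)[OF finite_S set_pmf_kernel_law[OF x(1)] nonempty_S]
    by (simp add: max_prob_def)
qed

lemma min_prob_mono: "min_prob \<xi> t \<le> min_prob \<xi> (j + t)"
proof -
  obtain x where x: "x \<in> S" "min_prob \<xi> (j + t) = prob \<xi> (j + t) x"
    by (rule min_prob_attained)
  then show ?thesis
    using prob_add[OF x(1)] pmf_weighted_sum_bounds(1)[OF finite_S set_pmf_kernel_law[OF x(1)] nonempty_S]
    by (simp add: min_prob_def)
qed

lemma min_prob_le_max_prob: "min_prob \<xi> t \<le> max_prob \<xi> t"
  using prob_le_max_prob[OF s_in_S] min_prob_le_prob[OF s_in_S] by (rule order_trans[rotated])

text \<open>After \<open>k\<close> steps every state puts weight at least \<open>doeblin_const\<close> on \<open>s\<close>, so the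
  averages cannot reach the extremes: the maximum moves down by a \<open>doeblin_const\<close>-fraction
  of its distance to the value at \<open>s\<close>, and symmetrically for the minimum.\<close>

lemma prob_k_steps_upper:
  assumes x: "x \<in> S"
  shows "prob \<xi> (k + t) x \<le> max_prob \<xi> t - doeblin_const * (max_prob \<xi> t - prob \<xi> t s)"
proof -
  let ?p = "\<lambda>z. pmf (kernel_law K x k) z"
  have "doeblin_const * (max_prob \<xi> t - prob \<xi> t s) \<le> ?p s * (max_prob \<xi> t - prob \<xi> t s)"
    using doeblin_const_le[OF x] prob_le_max_prob[OF s_in_S] by (intro mult_right_mono) auto
  also have "\<dots> \<le> (\<Sum>z\<in>S. ?p z * (max_prob \<xi> t - prob \<xi> t z))"
    by (rule member_le_sum[OF s_in_S]) (auto simp: prob_le_max_prob finite_S)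
  also have "\<dots> = max_prob \<xi> t - prob \<xi> (k + t) x"
    using prob_add[OF x] sum_pmf_eq_1[OF finite_S set_pmf_kernel_law[OF x]]
    by (simp add: right_diff_distrib sum_subtractf sum_distrib_right[symmetric])
  finally show ?thesis by linarith
qed

lemma prob_k_steps_lower:
  assumes x: "x \<in> S"
  shows "min_prob \<xi> t + doeblin_const * (prob \<xi> t s - min_prob \<xi> t) \<le> prob \<xi> (k + t) x"
proof -
  let ?p = "\<lambda>z. pmf (kernel_law K x k) z"
  have "doeblin_const * (prob \<xi> t s - min_prob \<xi> t) \<le> ?p s * (prob \<xi> t s - min_prob \<xi> t)"
    using doeblin_const_le[OF x] min_prob_le_prob[OF s_in_S] by (intro mult_right_mono) auto
  also have "\<dots> \<le> (\<Sum>z\<in>S. ?p z * (prob \<xi> t z - min_prob \<xi> t))"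
    by (rule member_le_sum[OF s_in_S]) (auto simp: min_prob_le_prob finite_S)
  also have "\<dots> = prob \<xi> (k + t) x - min_prob \<xi> t"
    using prob_add[OF x] sum_pmf_eq_1[OF finite_S set_pmf_kernel_law[OF x]]
    by (simp add: right_diff_distrib sum_subtractf sum_distrib_right[symmetric])
  finally show ?thesis by linarith
qed

lemma oscillation_contraction:
  "oscillation \<xi> (k + t) \<le> (1 - doeblin_const) * oscillation \<xi> t"
proof -
  obtain x where x: "x \<in> S" "max_prob \<xi> (k + t) = prob \<xi> (k + t) x"
    by (rule max_prob_attained)
  obtain y where y: "y \<in> S" "min_prob \<xi> (k + t) = prob \<xi> (k + t) y"
    by (rule min_prob_attained)
  show ?thesis
    using prob_k_steps_upper[OF x(1), of \<xi> t] prob_k_steps_lower[OF y(1), of \<xi> t] x(2) y(2)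
    by (simp add: oscillation_def algebra_simps)
qed

lemma oscillation_nonneg: "0 \<le> oscillation \<xi> t"
  using min_prob_le_max_prob[of \<xi> t] by (simp add: oscillation_def)

lemma oscillation_antimono: "t \<le> t' \<Longrightarrow> oscillation \<xi> t' \<le> oscillation \<xi> t"
  using max_prob_antimono[of \<xi> "t' - t" t] min_prob_mono[of \<xi> t "t' - t"]
  by (simp add: oscillation_def)

lemma oscillation_geometric: "oscillation \<xi> (n * k) \<le> (1 - doeblin_const) ^ n * oscillation \<xi> 0"
proof (induction n)
  case (Suc n)
  have "oscillation \<xi> (Suc n * k) \<le> (1 - doeblin_const) * oscillation \<xi> (n * k)"
    using oscillation_contraction[of \<xi> "n * k"] by (simp add: add.commute)
  also have "\<dots> \<le> (1 - doeblin_const) * ((1 - doeblin_const) ^ n * oscillation \<xi> 0)"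
    using Suc doeblin_const_le_1 by (intro mult_left_mono) auto
  finally show ?case by simp
qed simp

lemma oscillation_tendsto_0: "oscillation \<xi> \<longlonglongrightarrow> 0"
proof (unfold lim_sequentially, intro allI impI)
  fix r :: real assume "r > 0"
  have "(\<lambda>n. (1 - doeblin_const) ^ n * oscillation \<xi> 0) \<longlonglongrightarrow> 0 * oscillation \<xi> 0"
    using doeblin_const_pos doeblin_const_le_1
    by (intro tendsto_mult LIMSEQ_power_zero tendsto_const) auto
  with \<open>r > 0\<close> obtain n where "\<forall>m\<ge>n. dist ((1 - doeblin_const) ^ m * oscillation \<xi> 0) 0 < r"
    unfolding lim_sequentially by auto
  then have n: "(1 - doeblin_const) ^ n * oscillation \<xi> 0 < r"
    by (auto simp: dist_real_def)
  have "dist (oscillation \<xi> t) 0 < r" if "n * k \<le> t" for t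
  proof -
    have "oscillation \<xi> t \<le> (1 - doeblin_const) ^ n * oscillation \<xi> 0"
      using oscillation_antimono[OF that, of \<xi>] oscillation_geometric[of \<xi> n] by linarith
    with n oscillation_nonneg[of \<xi> t] show ?thesis by (simp add: dist_real_def)
  qed
  then show "\<exists>t0. \<forall>t\<ge>t0. dist (oscillation \<xi> t) 0 < r" by blast
qed

lemma prob_converges_uniformly: "\<exists>L. \<forall>x\<in>S. (\<lambda>t. prob \<xi> t x) \<longlonglongrightarrow> L"
proof -
  have "decseq (max_prob \<xi>)"
    unfolding decseq_Suc_iff using max_prob_antimono[of \<xi> 1] by simp
  moreover have "min_prob \<xi> 0 \<le> max_prob \<xi> t" for t
    using min_prob_mono[of \<xi> 0 t] min_prob_le_max_prob[of \<xi> t] by simp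
  ultimately obtain L where L: "max_prob \<xi> \<longlonglongrightarrow> L"
    using decseq_convergent by blast
  have "(\<lambda>t. prob \<xi> t x) \<longlonglongrightarrow> L" if x: "x \<in> S" for x
  proof -
    have "(\<lambda>t. max_prob \<xi> t - prob \<xi> t x) \<longlonglongrightarrow> 0"
    proof (rule tendsto_sandwich[of "\<lambda>_. 0" _ _ "oscillation \<xi>"])
      show "\<forall>\<^sub>F t in sequentially. 0 \<le> max_prob \<xi> t - prob \<xi> t x"
        using prob_le_max_prob[OF x] by simp
      show "\<forall>\<^sub>F t in sequentially. max_prob \<xi> t - prob \<xi> t x \<le> oscillation \<xi> t"
        using min_prob_le_prob[OF x] by (simp add: oscillation_def)
    qed (simp_all add: oscillation_tendsto_0)
    from tendsto_diff[OF L this] show ?thesis by simp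
  qed
  then show ?thesis by blast
qed

definition limit_prob :: "'b \<Rightarrow> real" where
  "limit_prob \<xi> = (if \<xi> \<in> S then lim (\<lambda>t. prob \<xi> t s) else 0)"

lemma tendsto_limit_prob:
  assumes "x \<in> S" "\<xi> \<in> S"
  shows "(\<lambda>t. prob \<xi> t x) \<longlonglongrightarrow> limit_prob \<xi>"
proof -
  obtain L where L: "\<forall>x\<in>S. (\<lambda>t. prob \<xi> t x) \<longlonglongrightarrow> L"
    using prob_converges_uniformly by blast
  then have "limit_prob \<xi> = L" using s_in_S assms(2) by (simp add: limit_prob_def limI)
  with L assms(1) show ?thesis by simp
qed

lemma limit_prob_nonneg: "0 \<le> limit_prob \<xi>"
  using LIMSEQ_le_const[OF tendsto_limit_prob[OF s_in_S]] by (auto simp: limit_prob_def prob_def)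

lemma sum_limit_prob: "(\<Sum>\<xi>\<in>S. limit_prob \<xi>) = 1"
proof -
  have "(\<lambda>t. \<Sum>\<xi>\<in>S. prob \<xi> t s) \<longlonglongrightarrow> (\<Sum>\<xi>\<in>S. limit_prob \<xi>)"
    by (intro tendsto_sum tendsto_limit_prob s_in_S)
  moreover have "(\<lambda>t. \<Sum>\<xi>\<in>S. prob \<xi> t s) = (\<lambda>t. 1)"
    using sum_pmf_eq_1[OF finite_S set_pmf_kernel_law[OF s_in_S]] by (simp add: prob_def)
  ultimately have "(\<lambda>t. 1 :: real) \<longlonglongrightarrow> (\<Sum>\<xi>\<in>S. limit_prob \<xi>)" by simp
  then show ?thesis by (simp add: LIMSEQ_const_iff)
qed

definition limit_pmf :: "'b pmf" where
  "limit_pmf = embed_pmf limit_prob"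

lemma pmf_limit_pmf: "pmf limit_pmf \<xi> = limit_prob \<xi>"
proof -
  have "(\<integral>\<^sup>+x. ennreal (limit_prob x) \<partial>count_space UNIV) = (\<Sum>x\<in>S. ennreal (limit_prob x))"
    by (rule nn_integral_count_space'[OF finite_S]) (auto simp: limit_prob_def)
  also have "\<dots> = 1"
    using sum_limit_prob limit_prob_nonneg by (simp add: sum_ennreal)
  finally show ?thesis
    unfolding limit_pmf_def by (rule pmf_embed_pmf[OF limit_prob_nonneg])
qed

lemma stationary_eq_limit_pmf:
  assumes st: "stationary_on S K \<pi>"
  shows "\<pi> = limit_pmf"
proof (rule pmf_eqI)
  fix \<xi>
  have \<pi>S: "set_pmf \<pi> \<subseteq> S" using st by (simp add: stationary_on_def)
  show "pmf \<pi> \<xi> = pmf limit_pmf \<xi>"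
  proof (cases "\<xi> \<in> S")
    case False
    with \<pi>S show ?thesis by (auto simp: pmf_limit_pmf limit_prob_def pmf_eq_0_set_pmf)
  next
    case True
    have "pmf \<pi> \<xi> = (\<Sum>z\<in>S. pmf \<pi> z * prob \<xi> t z)" for t
      using pmf_bind_finite_support[OF finite_S \<pi>S, of "\<lambda>z. kernel_law K z t" \<xi>]
      by (simp add: stationary_on_kernel_law[OF st] prob_def)
    moreover have "(\<lambda>t. \<Sum>z\<in>S. pmf \<pi> z * prob \<xi> t z) \<longlonglongrightarrow> (\<Sum>z\<in>S. pmf \<pi> z * limit_prob \<xi>)"
      by (intro tendsto_sum tendsto_mult tendsto_const tendsto_limit_prob True)
    moreover have "(\<Sum>z\<in>S. pmf \<pi> z * limit_prob \<xi>) = limit_prob \<xi>"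
      using sum_pmf_eq_1[OF finite_S \<pi>S] by (simp add: sum_distrib_right[symmetric])
    ultimately show ?thesis by (simp add: pmf_limit_pmf LIMSEQ_const_iff)
  qed
qed

lemma limit_pmf_stationary: "stationary_on S K limit_pmf"
proof -
  have set_limit: "set_pmf limit_pmf \<subseteq> S"
    by (auto simp: set_pmf_iff pmf_limit_pmf limit_prob_def split: if_split_asm)
  have "pmf (bind_pmf limit_pmf K) \<xi> = pmf limit_pmf \<xi>" for \<xi>
  proof -
    have bind: "pmf (bind_pmf limit_pmf K) \<xi> = (\<Sum>z\<in>S. limit_prob z * pmf (K z) \<xi>)"
      using pmf_bind_finite_support[OF finite_S set_limit] by (simp add: pmf_limit_pmf)
    show ?thesis
    proof (cases "\<xi> \<in> S")
      case False
      then have "pmf (K z) \<xi> = 0" if "z \<in> S" for z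
        using closed[OF that] by (auto simp: pmf_eq_0_set_pmf)
      with bind False show ?thesis by (simp add: pmf_limit_pmf limit_prob_def)
    next
      case True
      have "prob \<xi> (Suc t) s = (\<Sum>z\<in>S. prob z t s * pmf (K z) \<xi>)" for t
        unfolding prob_def kernel_law_Suc
        by (rule pmf_bind_finite_support[OF finite_S set_pmf_kernel_law[OF s_in_S]])
      moreover have "(\<lambda>t. \<Sum>z\<in>S. prob z t s * pmf (K z) \<xi>) \<longlonglongrightarrow> (\<Sum>z\<in>S. limit_prob z * pmf (K z) \<xi>)"
        by (intro tendsto_sum tendsto_mult tendsto_const tendsto_limit_prob s_in_S)
      moreover have "(\<lambda>t. prob \<xi> (Suc t) s) \<longlonglongrightarrow> limit_prob \<xi>"
        using tendsto_limit_prob[OF s_in_S True] by (rule LIMSEQ_Suc)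
      ultimately show ?thesis using bind LIMSEQ_unique by (simp add: pmf_limit_pmf)
    qed
  qed
  with set_limit show ?thesis by (simp add: stationary_on_def pmf_eqI)
qed

theorem unique_stationary_and_convergence:
  "(\<exists>!\<pi>. stationary_on S K \<pi>) \<and>
   (\<forall>\<pi>. stationary_on S K \<pi> \<longrightarrow>
      (\<forall>\<xi>\<in>S. \<forall>\<eta>\<in>S. (\<lambda>t. pmf (kernel_law K \<eta> t) \<xi>) \<longlonglongrightarrow> pmf \<pi> \<xi>))"
proof (intro conjI allI impI ballI)
  show "\<exists>!\<pi>. stationary_on S K \<pi>"
    using limit_pmf_stationary stationary_eq_limit_pmf by blast
next
  fix \<pi> \<xi> \<eta> assume "stationary_on S K \<pi>" "\<xi> \<in> S" "\<eta> \<in> S"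
  then show "(\<lambda>t. pmf (kernel_law K \<eta> t) \<xi>) \<longlonglongrightarrow> pmf \<pi> \<xi>"
    using tendsto_limit_prob[of \<eta> \<xi>] stationary_eq_limit_pmf[of \<pi>] by (simp add: pmf_limit_pmf prob_def)
qed

end

lemma lazy_reachable_doeblin_chain:
  assumes "finite S" "s \<in> S" "\<And>x. x \<in> S \<Longrightarrow> set_pmf (K x) \<subseteq> S" "\<And>x. x \<in> set_pmf (K x)"
    and reach: "\<And>x. x \<in> S \<Longrightarrow> (\<lambda>x y. y \<in> set_pmf (K x))\<^sup>*\<^sup>* x s"
  shows "\<exists>k. doeblin_chain S K s k"
proof -
  obtain T where T: "\<And>x. x \<in> S \<Longrightarrow> s \<in> set_pmf (kernel_law K x (T x))"
    using rtranclp_support_kernel_law[OF reach] by metis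
  have "s \<in> set_pmf (kernel_law K x (Max (T ` S)))" if "x \<in> S" for x
    using set_pmf_kernel_law_mono_lazy[OF assms(4) T[OF that]] that \<open>finite S\<close> by simp
  moreover have "S \<noteq> {}" using \<open>s \<in> S\<close> by blast
  ultimately have "doeblin_chain S K s (Max (T ` S))"
    using assms(1,3) by (intro doeblin_chain.intro)
  then show ?thesis ..
qed

section \<open>The uniform saving model\<close>

lemma sum_remove_two:
  assumes "finite A" "x \<in> A" "y \<in> A" "x \<noteq> y"
  shows "sum f A = f x + f y + sum f (A - {x, y})"
proof -
  have "sum f A = f x + sum f (A - {x})" using assms by (simp add: sum.remove)
  also have "sum f (A - {x}) = f y + sum f (A - {x} - {y})"
    using assms by (intro sum.remove) auto
  finally show ?thesis by (simp add: Diff_insert2[symmetric] add.assoc)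
qed

lemma set_pmf_usm_stepE:
  assumes "\<zeta> \<in> set_pmf (usm_step E \<xi>)" "finite E" "E \<noteq> {}"
  obtains x y a where "(x, y) \<in> E" "a \<le> \<xi> x + \<xi> y" "\<zeta> = \<xi>(x := a, y := \<xi> x + \<xi> y - a)"
proof -
  have "\<exists>x y cx cy u. (x, y) \<in> E \<and> cx \<le> \<xi> x \<and> cy \<le> \<xi> y \<and> u \<le> \<xi> x + \<xi> y - cx - cy \<and>
      \<zeta> = \<xi>(x := cx + u, y := \<xi> x + \<xi> y - cx - u)"
    using assms by (auto simp: usm_step_def split: prod.splits)
  then obtain x y cx cy u where "(x, y) \<in> E" "cx \<le> \<xi> x" "cy \<le> \<xi> y" "u \<le> \<xi> x + \<xi> y - cx - cy"
      "\<zeta> = \<xi>(x := cx + u, y := \<xi> x + \<xi> y - cx - u)"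
    by blast
  with that[of x y "cx + u"] show thesis by auto
qed

text \<open>Witnesses: \<open>U\<^sub>1 = U\<^sub>2 = 0\<close> and \<open>U = a\<close>.\<close>

lemma usm_step_redistribute:
  assumes "finite E" "(x, y) \<in> E" "a \<le> \<xi> x + \<xi> y"
  shows "\<xi>(x := a, y := \<xi> x + \<xi> y - a) \<in> set_pmf (usm_step E \<xi>)"
  using assms unfolding usm_step_def
  by (auto dest!: bspec[of _ _ "(x, y)"])
    (drule bspec[of _ _ 0], simp, drule bspec[of _ _ 0], simp, drule bspec[of _ _ a], simp_all)

definition concentrated :: "'a \<Rightarrow> nat \<Rightarrow> 'a \<Rightarrow> nat" where
  "concentrated v M = (\<lambda>w. if w = v then M else 0)"

locale usm_graph =
  fixes V :: "'a set" and E :: "('a \<times> 'a) set" and M :: nat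
  assumes graph: "finite_connected_graph V E"
begin

lemma finite_V: "finite V" and nonempty_V: "V \<noteq> {}" and edges_in_V: "E \<subseteq> V \<times> V"
  and no_loop: "(x, x) \<notin> E" and connected: "x \<in> V \<Longrightarrow> y \<in> V \<Longrightarrow> (x, y) \<in> (E \<union> E\<inverse>)\<^sup>*"
  using graph unfolding finite_connected_graph_def by auto

lemma finite_E: "finite E"
  using finite_subset[OF edges_in_V] finite_V by auto

lemma le_total_mass: "\<xi> \<in> configs V M \<Longrightarrow> \<xi> x \<le> M"
  using member_le_sum[of x V \<xi>] finite_V by (cases "x \<in> V") (auto simp: configs_def)

lemma finite_configs: "finite (configs V M)"
proof -
  have "configs V M \<subseteq> {\<xi>. \<forall>x. (x \<in> V \<longrightarrow> \<xi> x \<in> {0..M}) \<and> (x \<notin> V \<longrightarrow> \<xi> x = 0)}"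
    using le_total_mass by (auto simp: configs_def)
  then show ?thesis
    using finite_set_of_finite_funs[OF finite_V finite_atLeastAtMost] by (rule finite_subset)
qed

lemma concentrated_in_configs: "v \<in> V \<Longrightarrow> concentrated v M \<in> configs V M"
  using finite_V by (auto simp: configs_def concentrated_def)

lemma usm_step_closed:
  assumes "\<xi> \<in> configs V M"
  shows "set_pmf (usm_step E \<xi>) \<subseteq> configs V M"
proof (cases "E = {}")
  case True
  with assms show ?thesis by (simp add: usm_step_def)
next
  case False
  show ?thesis
  proof
    fix \<zeta> assume "\<zeta> \<in> set_pmf (usm_step E \<xi>)"
    then obtain x y a where xy: "(x, y) \<in> E" and a: "a \<le> \<xi> x + \<xi> y"
        and \<zeta>: "\<zeta> = \<xi>(x := a, y := \<xi> x + \<xi> y - a)"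
      using set_pmf_usm_stepE[OF _ finite_E False] by blast
    have x_y: "x \<in> V" "y \<in> V" "x \<noteq> y" using xy edges_in_V no_loop by auto
    have "sum \<zeta> V = \<zeta> x + \<zeta> y + sum \<zeta> (V - {x, y})" by (rule sum_remove_two[OF finite_V x_y])
    also have "sum \<zeta> (V - {x, y}) = sum \<xi> (V - {x, y})" using \<zeta> by (intro sum.cong) auto
    also have "\<zeta> x + \<zeta> y = \<xi> x + \<xi> y" using \<zeta> x_y a by auto
    also have "\<xi> x + \<xi> y + sum \<xi> (V - {x, y}) = sum \<xi> V" by (rule sum_remove_two[OF finite_V x_y, symmetric])
    finally show "\<zeta> \<in> configs V M"
      using assms \<zeta> x_y by (auto simp: configs_def)
  qed
qed

lemma usm_step_lazy: "\<xi> \<in> set_pmf (usm_step E \<xi>)"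
proof (cases "E = {}")
  case True
  then show ?thesis by (simp add: usm_step_def)
next
  case False
  then obtain x y where "(x, y) \<in> E" by auto
  from usm_step_redistribute[OF finite_E this, of "\<xi> x" \<xi>] show ?thesis by simp
qed

lemma usm_step_push:
  assumes "(y, z) \<in> E \<union> E\<inverse>"
  shows "\<xi>(y := 0, z := \<xi> z + \<xi> y) \<in> set_pmf (usm_step E \<xi>)"
proof (cases "(y, z) \<in> E")
  case True
  from usm_step_redistribute[OF finite_E True, of 0 \<xi>] show ?thesis by (simp add: add.commute)
next
  case False
  with assms have "(z, y) \<in> E" by auto
  moreover from this have "y \<noteq> z" using no_loop by auto
  ultimately show ?thesis
    using usm_step_redistribute[OF finite_E, of z y "\<xi> z + \<xi> y" \<xi>] by (simp add: fun_upd_twist)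
qed

abbreviation usm_reachable :: "('a \<Rightarrow> nat) \<Rightarrow> ('a \<Rightarrow> nat) \<Rightarrow> bool" where
  "usm_reachable \<equiv> (\<lambda>\<xi> \<zeta>. \<zeta> \<in> set_pmf (usm_step E \<xi>))\<^sup>*\<^sup>*"

lemma usm_reachable_configs: "usm_reachable \<xi> \<zeta> \<Longrightarrow> \<xi> \<in> configs V M \<Longrightarrow> \<zeta> \<in> configs V M"
  by (induction rule: rtranclp_induct) (use usm_step_closed in auto)

text \<open>Pushing the whole content of each vertex to the next one along a path from \<open>y\<close> to
  \<open>v\<close> carries the positive mass of \<open>y\<close> all the way to \<open>v\<close>.\<close>

lemma usm_reachable_increase:
  assumes "(y, v) \<in> (E \<union> E\<inverse>)\<^sup>*" "0 < \<xi> y" "y \<noteq> v"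
  shows "\<exists>\<zeta>. usm_reachable \<xi> \<zeta> \<and> \<xi> v < \<zeta> v"
  using assms
proof (induction arbitrary: \<xi> rule: converse_rtrancl_induct)
  case (step y z)
  define \<xi>' where "\<xi>' = \<xi>(y := 0, z := \<xi> z + \<xi> y)"
  have move: "usm_reachable \<xi> \<xi>'"
    unfolding \<xi>'_def using usm_step_push[OF step(1)] by blast
  show ?case
  proof (cases "z = v")
    case True
    with step.prems have "\<xi> v < \<xi>' v" by (simp add: \<xi>'_def)
    with move show ?thesis by blast
  next
    case False
    have "y \<noteq> z" using step(1) no_loop by auto
    with step.prems have "0 < \<xi>' z" by (simp add: \<xi>'_def)
    with step.IH False obtain \<zeta> where \<zeta>: "usm_reachable \<xi>' \<zeta>" "\<xi>' v < \<zeta> v" by blast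
    have "usm_reachable \<xi> \<zeta>" using move \<zeta>(1) by (rule rtranclp_trans)
    moreover have "\<xi>' v = \<xi> v" using False step.prems by (simp add: \<xi>'_def)
    ultimately show ?thesis using \<zeta>(2) by auto
  qed
qed simp

lemma usm_reachable_concentrated:
  assumes v: "v \<in> V" and "\<eta> \<in> configs V M"
  shows "usm_reachable \<eta> (concentrated v M)"
  using assms(2)
proof (induction "M - \<eta> v" arbitrary: \<eta> rule: less_induct)
  case less
  show ?case
  proof (cases "\<exists>y\<in>V. y \<noteq> v \<and> 0 < \<eta> y")
    case False
    then have "sum \<eta> (V - {v}) = 0" by (intro sum.neutral) auto
    then have "sum \<eta> V = \<eta> v"
      using finite_V v by (simp add: sum.remove)
    have "\<eta> w = concentrated v M w" for w
      using False less.prems \<open>sum \<eta> V = \<eta> v\<close>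
      by (cases "w \<in> V") (auto simp: configs_def concentrated_def)
    then have "\<eta> = concentrated v M" by (rule ext)
    then show ?thesis by simp
  next
    case True
    then obtain y where y: "y \<in> V" "y \<noteq> v" "0 < \<eta> y" by blast
    then obtain \<zeta> where \<zeta>: "usm_reachable \<eta> \<zeta>" "\<eta> v < \<zeta> v"
      using usm_reachable_increase[OF connected[OF y(1) v]] by blast
    have "\<zeta> \<in> configs V M" using usm_reachable_configs[OF \<zeta>(1) less.prems] .
    moreover have "M - \<zeta> v < M - \<eta> v"
      using \<zeta>(2) le_total_mass[OF calculation, of v] by linarith
    ultimately have "usm_reachable \<zeta> (concentrated v M)" using less.hyps by blast
    with \<zeta>(1) show ?thesis by simp
  qed
qed

lemma usm_doeblin_chain:
  assumes "v \<in> V"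
  shows "\<exists>k. doeblin_chain (configs V M) (usm_step E) (concentrated v M) k"
  using finite_configs concentrated_in_configs[OF assms] usm_step_closed usm_step_lazy
    usm_reachable_concentrated[OF assms]
  by (rule lazy_reachable_doeblin_chain)

end

theorem lemma5:
  fixes V :: "'a set" and E :: "('a \<times> 'a) set" and M :: nat
  assumes "finite_connected_graph V E"
  shows "(\<exists>!\<pi>. usm_stationary V E M \<pi>) \<and>
         (\<forall>\<pi>. usm_stationary V E M \<pi> \<longrightarrow>
            (\<forall>\<xi>\<in>configs V M. \<forall>\<eta>\<in>configs V M.
               (\<lambda>t. pmf (usm_law E \<eta> t) \<xi>) \<longlonglongrightarrow> pmf \<pi> \<xi>))"
proof -
  interpret usm_graph V E M using assms by unfold_locales
  obtain v where "v \<in> V" using nonempty_V by blast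
  then obtain k where chain: "doeblin_chain (configs V M) (usm_step E) (concentrated v M) k"
    using usm_doeblin_chain by blast
  have law: "usm_law E = kernel_law (usm_step E)"
    by (intro ext) (simp add: usm_law_def kernel_law_def)
  have stationary: "usm_stationary V E M = stationary_on (configs V M) (usm_step E)"
    by (intro ext) (simp add: usm_stationary_def stationary_on_def)
  show ?thesis
    unfolding law stationary by (rule doeblin_chain.unique_stationary_and_convergence[OF chain])
qed

end
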